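(* Let $U\subset X$ be $p$-path open and $E\subset U$. Then $\mathrm{Mod}_p(\Gamma_E^U)=\mathrm{Mod}_p(\Gamma_E^X)$.
   Context: Here $1\le p<\infty$ and $X=(X,d,\mu)$ is a metric space with a positive complete Borel measure $\mu$ such that $0<\mu(B)<\infty$ for all open balls $B$ (no doubling or Poincaré assumption). Curves are nonconstant, compact, rectifiable curves $\gamma:[0,l_\gamma]\to X$ parametrized by arc length. The $p$-modulus of a family $\Gamma$ of curves is $\mathrm{Mod}_p(\Gamma)=\inf\int_X\rho^p\,d\mu$ over nonnegative Borel functions $\rho$ with $\int_\gamma\rho\,ds\ge1$ for all $\gamma\in\Gamma$; a property holds for $p$-a.e. curve if the family of curves where it fails has $p$-modulus zero. A set $U$ is $p$-path open if for $p$-a.e. curve $\gamma:[0,l_\gamma]\to X$, the set $\gamma^{-1}(U)$ is relatively open in $[0,l_\gamma]$. For $E\subset U$, $\Gamma_E^U$ denotes the family of curves $\gamma:[0,l_\gamma]\to U$ with $\gamma^{-1}(E)\ne\emptyset$. *)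

theory Defs
  imports "HOL-Analysis.Analysis"
begin

definition curve_length :: "(real \<Rightarrow> 'a::metric_space) \<Rightarrow> real \<Rightarrow> real \<Rightarrow> ereal" where
  "curve_length g a b =
     (SUP ts \<in> {ts. sorted ts \<and> ts \<noteq> [] \<and> hd ts = a \<and> last ts = b}.
        ereal (\<Sum>i<length ts - 1. dist (g (ts ! i)) (g (ts ! Suc i))))"

text \<open>A curve is a pair (l, g) with l > 0 and g : [0,l] \<rightarrow> X parametrized by arc length
  (so it is nonconstant, compact, rectifiable). Values of g outside [0,l] are irrelevant.\<close>
definition arclength_curve :: "real \<times> (real \<Rightarrow> 'a::metric_space) \<Rightarrow> bool" where
  "arclength_curve c \<longleftrightarrow> fst c > 0 \<and>
     (\<forall>s t. 0 \<le> s \<longrightarrow> s \<le> t \<longrightarrow> t \<le> fst c \<longrightarrow> curve_length (snd c) s t = ereal (t - s))"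

definition curves :: "(real \<times> (real \<Rightarrow> 'a::metric_space)) set" where
  "curves = {c. arclength_curve c}"

definition line_integral :: "('a \<Rightarrow> ennreal) \<Rightarrow> real \<times> (real \<Rightarrow> 'a) \<Rightarrow> ennreal" where
  "line_integral \<rho> c = (\<integral>\<^sup>+ t. \<rho> (snd c t) * indicator {0..fst c} t \<partial>lborel)"

definition epowr :: "ennreal \<Rightarrow> real \<Rightarrow> ennreal" where
  "epowr x p = (if x = \<infinity> then \<infinity> else ennreal (enn2real x powr p))"

definition admissible :: "(real \<times> (real \<Rightarrow> 'a::metric_space)) set \<Rightarrow> ('a \<Rightarrow> ennreal) \<Rightarrow> bool" where
  "admissible \<Gamma> \<rho> \<longleftrightarrow> \<rho> \<in> borel_measurable borel \<and> (\<forall>c\<in>\<Gamma>. line_integral \<rho> c \<ge> 1)"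

definition Mod :: "real \<Rightarrow> 'a::metric_space measure \<Rightarrow> (real \<times> (real \<Rightarrow> 'a)) set \<Rightarrow> ennreal" where
  "Mod p \<mu> \<Gamma> = (INF \<rho> \<in> {\<rho>. admissible \<Gamma> \<rho>}. \<integral>\<^sup>+ x. epowr (\<rho> x) p \<partial>\<mu>)"

definition p_path_open :: "real \<Rightarrow> 'a::metric_space measure \<Rightarrow> 'a set \<Rightarrow> bool" where
  "p_path_open p \<mu> U \<longleftrightarrow>
     Mod p \<mu> {c \<in> curves. \<not> openin (top_of_set {0..fst c}) ({0..fst c} \<inter> snd c -` U)} = 0"

definition curves_meeting :: "'a::metric_space set \<Rightarrow> 'a set \<Rightarrow> (real \<times> (real \<Rightarrow> 'a)) set" where
  "curves_meeting E U = {c \<in> curves. snd c ` {0..fst c} \<subseteq> U \<and> snd c ` {0..fst c} \<inter> E \<noteq> {}}"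

definition mms :: "'a::metric_space measure \<Rightarrow> bool" where
  "mms \<mu> \<longleftrightarrow> space \<mu> = UNIV \<and> sets borel \<subseteq> sets \<mu> \<and>
     (\<forall>N \<in> null_sets \<mu>. \<forall>A. A \<subseteq> N \<longrightarrow> A \<in> sets \<mu>) \<and>
     (\<forall>x r. r > 0 \<longrightarrow> 0 < emeasure \<mu> (ball x r) \<and> emeasure \<mu> (ball x r) < \<infinity>)"

end

theory Submission
  imports Defs
begin

text \<open>Every curve meeting E either lies in the exceptional family of curves along which U
  fails to be relatively open, which has modulus zero, or meets E at a time t0 near which
  it stays in U; the short subcurve around t0 then lies in U, meets E, and has a smaller
  line integral. Hence the maximum of an admissible function for the curves in U meeting E and
  a function of arbitrarily small p-energy admissible for the exceptional family is admissible
  for all curves meeting E. The argument works for every exponent.\<close>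

definition subcurve :: "real \<times> (real \<Rightarrow> 'a) \<Rightarrow> real \<Rightarrow> real \<Rightarrow> real \<times> (real \<Rightarrow> 'a)" where
  "subcurve c a b = (b - a, \<lambda>t. snd c (a + t))"

lemma curve_length_shift:
  "curve_length (\<lambda>t. g (a + t)) s t = curve_length g (a + s) (a + t)"
proof -
  let ?S1 = "{ts. sorted ts \<and> ts \<noteq> [] \<and> hd ts = s \<and> last ts = t}"
  let ?S2 = "{ts. sorted ts \<and> ts \<noteq> [] \<and> hd ts = a + s \<and> last ts = a + t}"
  have partitions: "?S1 = map (\<lambda>x. x - a) ` ?S2"
  proof
    show "?S1 \<subseteq> map (\<lambda>x. x - a) ` ?S2"
    proof
      fix ts assume "ts \<in> ?S1"
      then have "map (\<lambda>x. x + a) ts \<in> ?S2"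
        by (auto simp: sorted_map hd_map last_map)
      moreover have "ts = map (\<lambda>x. x - a) (map (\<lambda>x. x + a) ts)"
        by (simp add: comp_def)
      ultimately show "ts \<in> map (\<lambda>x. x - a) ` ?S2" by blast
    qed
    show "map (\<lambda>x. x - a) ` ?S2 \<subseteq> ?S1"
      by (auto simp: sorted_map hd_map last_map monoI)
  qed
  have sums: "(\<Sum>i<length (map (\<lambda>x. x - a) ts) - 1.
                 dist (g (a + map (\<lambda>x. x - a) ts ! i)) (g (a + map (\<lambda>x. x - a) ts ! Suc i)))
            = (\<Sum>i<length ts - 1. dist (g (ts ! i)) (g (ts ! Suc i)))" for ts
    by (rule sum.cong) auto
  show ?thesis
    unfolding curve_length_def partitions image_image sums ..
qed

lemma arclength_curve_dist_le:
  assumes "arclength_curve (l, g)" "0 \<le> s" "s \<le> t" "t \<le> l"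
  shows "dist (g s) (g t) \<le> t - s"
proof -
  have "ereal (dist (g s) (g t)) \<le> curve_length g s t"
    unfolding curve_length_def
    by (rule SUP_upper2[where i="[s, t]"]) (use assms in auto)
  also have "\<dots> = ereal (t - s)"
    using assms unfolding arclength_curve_def by auto
  finally show ?thesis by simp
qed

lemma arclength_curve_continuous_on:
  assumes "arclength_curve (l, g)"
  shows "continuous_on {0..l} g"
  unfolding continuous_on_iff
proof (intro ballI allI impI)
  fix x e :: real assume x: "x \<in> {0..l}" and "0 < e"
  have "dist (g y) (g x) \<le> dist y x" if y: "y \<in> {0..l}" for y
    using arclength_curve_dist_le[OF assms, of y x] arclength_curve_dist_le[OF assms, of x y] x y
    by (cases "y \<le> x") (auto simp: dist_real_def dist_commute)
  then show "\<exists>d>0. \<forall>y\<in>{0..l}. dist y x < d \<longrightarrow> dist (g y) (g x) < e"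
    using \<open>0 < e\<close> by force
qed

lemma arclength_curve_subcurve:
  assumes "arclength_curve (l, g)" "0 \<le> a" "a < b" "b \<le> l"
  shows "arclength_curve (subcurve (l, g) a b)"
  using assms unfolding arclength_curve_def subcurve_def by (auto simp: curve_length_shift)

lemma line_integral_subcurve_le:
  assumes c: "arclength_curve (l, g)" and ab: "0 \<le> a" "a \<le> b" "b \<le> l"
    and \<rho>: "\<rho> \<in> borel_measurable borel"
  shows "line_integral \<rho> (subcurve (l, g) a b) \<le> line_integral \<rho> (l, g)"
proof -
  define clamp where "clamp t = max 0 (min l t)" for t
  define h where "h t = \<rho> (g (clamp t)) * indicator {0..l} t" for t
  have "continuous_on UNIV (g \<circ> clamp)"
    by (rule continuous_on_compose[OF _ continuous_on_subset[OF arclength_curve_continuous_on[OF c]]])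
       (use ab in \<open>auto simp: clamp_def intro!: continuous_intros\<close>)
  then have "(g \<circ> clamp) \<in> borel_measurable borel"
    by (rule borel_measurable_continuous_onI)
  from measurable_comp[OF this \<rho>] have h_measurable: "h \<in> borel_measurable borel"
    unfolding h_def by (simp add: comp_def)
  have "line_integral \<rho> (l, g) = (\<integral>\<^sup>+ t. h t \<partial>lborel)"
    unfolding line_integral_def h_def
    by (rule nn_integral_cong) (auto simp: clamp_def indicator_def)
  also have "\<dots> = (\<integral>\<^sup>+ t. h (a + t) \<partial>lborel)"
    using nn_integral_real_affine[OF h_measurable, of 1 a] by simp
  finally have shifted: "line_integral \<rho> (l, g) = (\<integral>\<^sup>+ t. h (a + t) \<partial>lborel)" .
  have "line_integral \<rho> (subcurve (l, g) a b) \<le> (\<integral>\<^sup>+ t. h (a + t) \<partial>lborel)"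
    unfolding line_integral_def subcurve_def
    by (rule nn_integral_mono) (use ab in \<open>auto simp: h_def clamp_def indicator_def\<close>)
  then show ?thesis
    using shifted by simp
qed

lemma subcurve_in_curves_meeting:
  assumes c: "arclength_curve (l, g)" and t\<^sub>0: "t\<^sub>0 \<in> {0..l}" "g t\<^sub>0 \<in> E" and "E \<subseteq> U"
    and U_open: "openin (top_of_set {0..l}) ({0..l} \<inter> g -` U)"
  obtains a b where "0 \<le> a" "a < b" "b \<le> l" "subcurve (l, g) a b \<in> curves_meeting E U"
proof -
  obtain d where "d > 0" and d: "\<And>t. t \<in> {0..l} \<Longrightarrow> dist t t\<^sub>0 < d \<Longrightarrow> g t \<in> U"
    using U_open t\<^sub>0 \<open>E \<subseteq> U\<close> unfolding openin_euclidean_subtopology_iff by blast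
  define a where "a = max 0 (t\<^sub>0 - d / 2)"
  define b where "b = min l (t\<^sub>0 + d / 2)"
  have "l > 0"
    using c unfolding arclength_curve_def by simp
  then have ab: "0 \<le> a" "a < b" "b \<le> l" "a \<le> t\<^sub>0" "t\<^sub>0 \<le> b"
    using t\<^sub>0 \<open>d > 0\<close> unfolding a_def b_def by auto
  have "g ` {a..b} \<subseteq> U"
    using ab by (auto intro!: d simp: a_def b_def dist_real_def)
  moreover have "g t\<^sub>0 \<in> g ` {a..b} \<inter> E"
    using ab t\<^sub>0 by auto
  moreover have "(\<lambda>t. g (a + t)) ` {0..b - a} = g ` {a..b}"
  proof -
    have "(+) a ` {0..b - a} = {a..b}"
      by simp
    then show ?thesis
      by (metis image_image)
  qed
  ultimately have "subcurve (l, g) a b \<in> curves_meeting E U"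
    using arclength_curve_subcurve[OF c ab(1-3)]
    unfolding curves_meeting_def curves_def subcurve_def by auto
  then show ?thesis
    using ab that by blast
qed

lemma curves_meeting_subcurve_le:
  assumes c: "c \<in> curves_meeting E UNIV" and "E \<subseteq> U"
    and "openin (top_of_set {0..fst c}) ({0..fst c} \<inter> snd c -` U)"
  shows "\<exists>c'\<in>curves_meeting E U. \<forall>\<rho>\<in>borel_measurable borel. line_integral \<rho> c' \<le> line_integral \<rho> c"
proof -
  obtain l g where lg: "c = (l, g)" by fastforce
  obtain t\<^sub>0 where "t\<^sub>0 \<in> {0..l}" "g t\<^sub>0 \<in> E"
    using c unfolding lg curves_meeting_def by fastforce
  moreover have "arclength_curve (l, g)"
    using c unfolding lg curves_meeting_def curves_def by simp
  ultimately show ?thesis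
    using assms unfolding lg
    by (metis fst_conv snd_conv subcurve_in_curves_meeting line_integral_subcurve_le less_imp_le)
qed

lemma line_integral_mono:
  assumes "\<And>x. \<rho>' x \<le> \<rho> x"
  shows "line_integral \<rho>' c \<le> line_integral \<rho> c"
  unfolding line_integral_def by (rule nn_integral_mono) (auto intro: mult_right_mono assms)

lemma Mod_le_nn_integral:
  "admissible \<Gamma> \<rho> \<Longrightarrow> Mod p \<mu> \<Gamma> \<le> (\<integral>\<^sup>+ x. epowr (\<rho> x) p \<partial>\<mu>)"
  unfolding Mod_def by (rule INF_lower) simp

lemma Mod_mono: "\<Gamma>\<^sub>1 \<subseteq> \<Gamma>\<^sub>2 \<Longrightarrow> Mod p \<mu> \<Gamma>\<^sub>1 \<le> Mod p \<mu> \<Gamma>\<^sub>2"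
  unfolding Mod_def admissible_def by (rule INF_superset_mono) auto

lemma Mod_le_if_subcurves:
  assumes "\<And>c. c \<in> \<Gamma>\<^sub>1 \<Longrightarrow> \<exists>c'\<in>\<Gamma>\<^sub>2. \<forall>\<rho>\<in>borel_measurable borel. line_integral \<rho> c' \<le> line_integral \<rho> c"
  shows "Mod p \<mu> \<Gamma>\<^sub>1 \<le> Mod p \<mu> \<Gamma>\<^sub>2"
  unfolding Mod_def
proof (rule INF_mono)
  fix \<rho> assume "\<rho> \<in> {\<rho>. admissible \<Gamma>\<^sub>2 \<rho>}"
  then have "admissible \<Gamma>\<^sub>1 \<rho>"
    using assms unfolding admissible_def by (fastforce intro: order_trans)
  then show "\<exists>\<rho>'\<in>{\<rho>. admissible \<Gamma>\<^sub>1 \<rho>}. (\<integral>\<^sup>+ x. epowr (\<rho>' x) p \<partial>\<mu>) \<le> (\<integral>\<^sup>+ x. epowr (\<rho> x) p \<partial>\<mu>)"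
    by blast
qed

lemma borel_measurable_mms:
  "mms \<mu> \<Longrightarrow> f \<in> borel_measurable borel \<Longrightarrow> f \<in> borel_measurable \<mu>"
  unfolding mms_def measurable_def by auto

lemma borel_measurable_epowr: "(\<lambda>x. epowr x p) \<in> borel_measurable borel"
  unfolding epowr_def by measurable

lemma epowr_max_le: "epowr (max a b) p \<le> epowr a p + epowr b p"
  by (cases "a \<le> b") (auto simp: max_def add_increasing)

lemma admissible_Un_max:
  assumes "admissible \<Gamma>\<^sub>1 \<rho>\<^sub>1" "admissible \<Gamma>\<^sub>2 \<rho>\<^sub>2"
  shows "admissible (\<Gamma>\<^sub>1 \<union> \<Gamma>\<^sub>2) (\<lambda>x. max (\<rho>\<^sub>1 x) (\<rho>\<^sub>2 x))"
proof -
  have "line_integral \<rho>\<^sub>1 c \<le> line_integral (\<lambda>x. max (\<rho>\<^sub>1 x) (\<rho>\<^sub>2 x)) c"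
       "line_integral \<rho>\<^sub>2 c \<le> line_integral (\<lambda>x. max (\<rho>\<^sub>1 x) (\<rho>\<^sub>2 x)) c" for c
    by (simp_all add: line_integral_mono)
  then show ?thesis
    using assms unfolding admissible_def by (auto intro: order_trans borel_measurable_max)
qed

lemma Mod_Un_null_le:
  assumes "mms \<mu>" and null: "Mod p \<mu> \<Gamma>' = 0"
  shows "Mod p \<mu> (\<Gamma> \<union> \<Gamma>') \<le> Mod p \<mu> \<Gamma>"
  unfolding Mod_def[of p \<mu> \<Gamma>]
proof (rule INF_greatest)
  fix \<rho> assume "\<rho> \<in> {\<rho>. admissible \<Gamma> \<rho>}"
  then have \<rho>: "admissible \<Gamma> \<rho>" by simp
  show "Mod p \<mu> (\<Gamma> \<union> \<Gamma>') \<le> (\<integral>\<^sup>+ x. epowr (\<rho> x) p \<partial>\<mu>)"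
  proof (rule ennreal_le_epsilon)
    fix e :: real assume "0 < e"
    then have "(INF \<rho>' \<in> {\<rho>'. admissible \<Gamma>' \<rho>'}. \<integral>\<^sup>+ x. epowr (\<rho>' x) p \<partial>\<mu>) < e"
      using null unfolding Mod_def by simp
    then obtain \<rho>' where \<rho>': "admissible \<Gamma>' \<rho>'" and small: "(\<integral>\<^sup>+ x. epowr (\<rho>' x) p \<partial>\<mu>) < e"
      unfolding INF_less_iff by auto
    have measurable: "(\<lambda>x. epowr (f x) p) \<in> borel_measurable \<mu>" if "admissible \<Gamma>'' f" for \<Gamma>'' f
      using measurable_comp[OF _ borel_measurable_epowr] that
      by (auto simp: comp_def admissible_def intro: borel_measurable_mms[OF \<open>mms \<mu>\<close>])
    have "Mod p \<mu> (\<Gamma> \<union> \<Gamma>') \<le> (\<integral>\<^sup>+ x. epowr (max (\<rho> x) (\<rho>' x)) p \<partial>\<mu>)"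
      by (rule Mod_le_nn_integral[OF admissible_Un_max[OF \<rho> \<rho>']])
    also have "\<dots> \<le> (\<integral>\<^sup>+ x. epowr (\<rho> x) p + epowr (\<rho>' x) p \<partial>\<mu>)"
      by (rule nn_integral_mono) (simp add: epowr_max_le)
    also have "\<dots> = (\<integral>\<^sup>+ x. epowr (\<rho> x) p \<partial>\<mu>) + (\<integral>\<^sup>+ x. epowr (\<rho>' x) p \<partial>\<mu>)"
      by (rule nn_integral_add[OF measurable[OF \<rho>] measurable[OF \<rho>']])
    also have "\<dots> \<le> (\<integral>\<^sup>+ x. epowr (\<rho> x) p \<partial>\<mu>) + e"
      using small by (intro add_left_mono) simp
    finally show "Mod p \<mu> (\<Gamma> \<union> \<Gamma>') \<le> (\<integral>\<^sup>+ x. epowr (\<rho> x) p \<partial>\<mu>) + e" .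
  qed
qed

theorem lemma3p4:
  fixes \<mu> :: "'a::metric_space measure" and p :: real and U E :: "'a set"
  assumes "1 \<le> p" and "mms \<mu>"
    and "p_path_open p \<mu> U" and "E \<subseteq> U"
  shows "Mod p \<mu> (curves_meeting E U) = Mod p \<mu> (curves_meeting E UNIV)"
proof (rule antisym)
  show "Mod p \<mu> (curves_meeting E U) \<le> Mod p \<mu> (curves_meeting E UNIV)"
    by (rule Mod_mono) (auto simp: curves_meeting_def)
  define B where "B = {c \<in> curves. \<not> openin (top_of_set {0..fst c}) ({0..fst c} \<inter> snd c -` U)}"
  have "Mod p \<mu> (curves_meeting E UNIV - B) \<le> Mod p \<mu> (curves_meeting E U)"
    using \<open>E \<subseteq> U\<close> unfolding B_def
    by (intro Mod_le_if_subcurves curves_meeting_subcurve_le) (auto simp: curves_meeting_def)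
  moreover have "Mod p \<mu> (curves_meeting E UNIV) \<le> Mod p \<mu> ((curves_meeting E UNIV - B) \<union> B)"
    by (rule Mod_mono) blast
  moreover have "Mod p \<mu> ((curves_meeting E UNIV - B) \<union> B) \<le> Mod p \<mu> (curves_meeting E UNIV - B)"
    using assms(2,3) unfolding p_path_open_def B_def by (intro Mod_Un_null_le) auto
  ultimately show "Mod p \<mu> (curves_meeting E UNIV) \<le> Mod p \<mu> (curves_meeting E U)"
    by (meson order_trans)
qed

end
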